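(* Let $A(0)=1$ and $A(n)=nA(n-1)+1$ for $n\ge1$. Then: (i) The map $n\mapsto A(n)$ on $\{0,1,2,\dots\}$ extends uniquely to a continuous function $\tilde A:\mathbb{Z}_2\to\mathbb{Z}_2$. (ii) For each $k\ge1$ there is a unique $c_k\in[0,2^k)\cap\mathbb{Z}$ with $A(c_k)\equiv 0\pmod{2^k}$. (iii) The limit $c=\lim_{k\to\infty}c_k$ exists in $\mathbb{Z}_2$ and is the unique zero of $\tilde A$; its $2$-adic expansion begins $11001110010100010100110001\ldots$ (digits listed from the $2^0$ place upward). (iv) For every $n\in\mathbb{Z}_2$, $|\tilde A(n)|_2=|n-c|_2$.
   Context: $\mathbb{Z}_2$ denotes the $2$-adic integers and $|\cdot|_2$ the $2$-adic absolute value, normalized so that $|x|_2=2^{-v}$ where $2^v$ exactly divides $x$. *)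

theory Defs
  imports Complex_Main
begin

fun A :: "nat \<Rightarrow> nat" where
  "A 0 = 1"
| "A (Suc n) = Suc n * A n + 1"

text \<open>2-adic integers, represented by their digit sequences (digit i is the
  coefficient of 2^i). Every digit sequence is a 2-adic integer and vice versa.\<close>
type_synonym z2 = "nat \<Rightarrow> bool"

definition z2_trunc :: "z2 \<Rightarrow> nat \<Rightarrow> int" where
  "z2_trunc x k = (\<Sum>i<k. if x i then 2 ^ i else 0)"

text \<open>Embedding of the integers (two's complement digits for negatives).\<close>
definition z2_of_int :: "int \<Rightarrow> z2" where
  "z2_of_int a = (\<lambda>i. odd (a div 2 ^ i))"

definition z2_of_nat :: "nat \<Rightarrow> z2" where
  "z2_of_nat n = z2_of_int (int n)"

definition z2_zero :: z2 where
  "z2_zero = (\<lambda>i. False)"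

text \<open>Subtraction in Z_2: digit i of x - y is determined by x - y mod 2^(i+1).\<close>
definition z2_diff :: "z2 \<Rightarrow> z2 \<Rightarrow> z2" where
  "z2_diff x y = (\<lambda>i. odd (((z2_trunc x (Suc i) - z2_trunc y (Suc i)) mod 2 ^ Suc i) div 2 ^ i))"

definition z2_abs :: "z2 \<Rightarrow> real" where
  "z2_abs x = (if \<forall>i. \<not> x i then 0 else (1/2) ^ (LEAST i. x i))"

definition z2_continuous :: "(z2 \<Rightarrow> z2) \<Rightarrow> bool" where
  "z2_continuous f \<longleftrightarrow> (\<forall>x. \<forall>e>0. \<exists>d>0. \<forall>y.
      z2_abs (z2_diff y x) < d \<longrightarrow> z2_abs (z2_diff (f y) (f x)) < e)"

definition z2_tendsto :: "(nat \<Rightarrow> z2) \<Rightarrow> z2 \<Rightarrow> bool" where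
  "z2_tendsto X L \<longleftrightarrow> (\<forall>e>0. \<exists>N. \<forall>k\<ge>N. z2_abs (z2_diff (X k) L) < e)"

text \<open>The continuous extension of A to Z_2 (well-defined by part (i)).\<close>
definition Atil :: "z2 \<Rightarrow> z2" where
  "Atil = (THE F. z2_continuous F \<and> (\<forall>n. F (z2_of_nat n) = z2_of_nat (A n)))"

text \<open>c_k: the unique c in [0, 2^k) with A(c) = 0 mod 2^k (well-defined by part (ii)).\<close>
definition ck :: "nat \<Rightarrow> nat" where
  "ck k = (THE c. c < 2 ^ k \<and> 2 ^ k dvd A c)"

definition c_digits :: "nat list" where
  "c_digits = [1,1,0,0,1,1,1,0,0,1,0,1,0,0,0,1,0,1,0,0,1,1,0,0,0,1]"

end

(*
  Shifting the argument by h changes A by a multiple of h: A(n+h) = A(n) + h e, because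
  A(n+1+h) - A(n+1) = (n+1)(A(n+h) - A(n)) + h A(n+h).  Hence A mod 2^k only depends on
  n mod 2^k, so A extends digitwise to a continuous map on Z_2, uniquely since N is dense.
  For even h the quotient e moreover has the parity of n.  As A(n) is even exactly for odd n,
  if 2^k | A(r) (so r is odd) then exactly one of A(r), A(r + 2^k) is divisible by 2^(k+1):
  Hensel-style, the zeros of A mod 2^k form a single residue class c_k mod 2^k, and these
  classes are compatible.  Their limit c satisfies: A(n) = 0 mod 2^k iff n = c mod 2^k,
  which says at once that c is the only zero of the extension and that |A(n)|_2 = |n - c|_2.
*)
theory Submission
  imports Defs
begin

lemma even_A_iff: "even (A n) \<longleftrightarrow> odd n"
  by (induction n) auto

lemma A_add_multiple: "\<exists>e. A (n + h) = A n + h * e \<and> (even h \<longrightarrow> odd e = odd n)"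
proof (induction n)
  case 0
  show ?case
  proof (cases h)
    case 0
    then show ?thesis by (intro exI[of _ 0]) simp
  next
    case (Suc h')
    then show ?thesis by (intro exI[of _ "A h'"]) (auto simp: even_A_iff)
  qed
next
  case (Suc n)
  then obtain e where e: "A (n + h) = A n + h * e" and par: "even h \<longrightarrow> odd e = odd n"
    by blast
  have "A (Suc n + h) = (Suc n + h) * A (n + h) + 1" by simp
  also have "\<dots> = A (Suc n) + h * (Suc n * e + A (n + h))"
    unfolding e by (simp add: algebra_simps)
  finally have "A (Suc n + h) = A (Suc n) + h * (Suc n * e + A (n + h))" .
  moreover have "even h \<longrightarrow> odd (Suc n * e + A (n + h)) = odd (Suc n)"
    using par by (auto simp: even_A_iff)
  ultimately show ?case by blast
qed

lemma A_mod: "A n mod h = A (n mod h) mod h"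
proof -
  have "A (r + h * q) mod h = A r mod h" for r q
  proof (induction q)
    case (Suc q)
    obtain e where e: "A (r + h * q + h) = A (r + h * q) + h * e"
      using A_add_multiple by blast
    have "r + h * Suc q = r + h * q + h" by simp
    then show ?case by (simp only: e) (simp add: Suc.IH)
  qed simp
  from this[of "n mod h" "n div h"] show ?thesis by simp
qed

lemma A_lift:
  assumes "even h" and "h dvd A r"
  shows "2 * h dvd A (r + h) \<longleftrightarrow> \<not> 2 * h dvd A r"
proof -
  have "A r \<noteq> 0" by (cases r) auto
  then have "h \<noteq> 0" using assms(2) by auto
  have "even (A r)" using assms dvd_trans by blast
  then have "odd r" by (simp add: even_A_iff)
  then obtain e where e: "A (r + h) = A r + h * e" and "odd e"
    using A_add_multiple[of r h] assms(1) by blast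
  obtain a where a: "A r = h * a" using assms(2) by blast
  have "2 * h dvd A (r + h) \<longleftrightarrow> 2 dvd a + e"
    using \<open>h \<noteq> 0\<close> by (simp add: e a mult.commute[of 2] flip: distrib_left)
  also have "\<dots> \<longleftrightarrow> \<not> 2 dvd a" using \<open>odd e\<close> by simp
  also have "\<dots> \<longleftrightarrow> \<not> 2 * h dvd A r" using \<open>h \<noteq> 0\<close> by (simp add: a mult.commute[of 2])
  finally show ?thesis .
qed

lemma pow2_dvd_A_iff_mod_eq: "k \<ge> 1 \<Longrightarrow> \<exists>r<2 ^ k. \<forall>n. 2 ^ k dvd A n \<longleftrightarrow> n mod 2 ^ k = r"
proof (induction k rule: nat_induct_at_least)
  case base
  show ?case by (intro exI[of _ 1]) (auto simp: even_A_iff odd_iff_mod_2_eq_one)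
next
  case (Suc k)
  define h :: nat where "h = 2 ^ k"
  obtain r where "r < h" and r: "\<And>n. h dvd A n \<longleftrightarrow> n mod h = r"
    using Suc.IH h_def by blast
  have "even h" using Suc.hyps h_def by simp
  define r' where "r' = (if 2 * h dvd A r then r else r + h)"
  have "r' < 2 * h" and "r' mod h = r" using \<open>r < h\<close> r'_def by simp_all
  have "h dvd A r" using r[of r] \<open>r < h\<close> by simp
  then have lift: "2 * h dvd A (r + h) \<longleftrightarrow> \<not> 2 * h dvd A r"
    using A_lift \<open>even h\<close> by blast
  have "2 * h dvd A n \<longleftrightarrow> n mod (2 * h) = r'" for n
  proof (cases "n mod h = r")
    case True
    have "2 * h dvd A n \<longleftrightarrow> 2 * h dvd A (n mod (2 * h))"
      using A_mod[of n "2 * h"] by (simp add: dvd_eq_mod_eq_0)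
    moreover have "n mod (2 * h) = r \<or> n mod (2 * h) = r + h"
      using mod_double_nat True by blast
    ultimately show ?thesis using lift \<open>r < h\<close> r'_def by auto
  next
    case False
    then have "\<not> 2 * h dvd A n" using r by (meson dvd_mult_right)
    moreover have "n mod (2 * h) \<noteq> r'"
      using False \<open>r' mod h = r\<close> by (metis mod_mod_cancel dvd_triv_right)
    ultimately show ?thesis by simp
  qed
  with \<open>r' < 2 * h\<close> show ?case by (auto simp: h_def)
qed

lemma z2_of_nat_bit: "z2_of_nat n i = bit n i"
  by (simp add: z2_of_nat_def z2_of_int_def bit_of_nat_iff_bit flip: bit_iff_odd)

lemma z2_trunc_eq_horner_sum: "z2_trunc x k = horner_sum of_bool 2 (map x [0..<k])"
  unfolding z2_trunc_def horner_sum_eq_sum by (intro sum.cong) auto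

lemma bit_z2_trunc [simp]: "bit (z2_trunc x k) i \<longleftrightarrow> i < k \<and> x i"
  by (auto simp: z2_trunc_eq_horner_sum bit_horner_sum_bit_iff)

lemma z2_trunc_nonneg: "0 \<le> z2_trunc x k"
  by (simp add: z2_trunc_eq_horner_sum horner_sum_nonnegative)

lemma z2_trunc_eq_take_bit: "(\<And>i. i < k \<Longrightarrow> x i = bit a i) \<Longrightarrow> z2_trunc x k = take_bit k a"
  by (simp add: bit_eq_iff bit_take_bit_iff) blast

lemma z2_trunc_less: "z2_trunc x k < 2 ^ k"
proof -
  have "z2_trunc x k = take_bit k (z2_trunc x k)"
    by (rule z2_trunc_eq_take_bit) simp
  then show ?thesis by (metis take_bit_int_less_exp)
qed

lemma z2_trunc_eq_iff: "z2_trunc x k = z2_trunc y k \<longleftrightarrow> (\<forall>i<k. x i = y i)"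
  by (auto simp: bit_eq_iff)

lemma z2_trunc_of_nat: "z2_trunc (z2_of_nat n) k = int (n mod 2 ^ k)"
proof -
  have "z2_trunc (z2_of_nat n) k = take_bit k (int n)"
    by (rule z2_trunc_eq_take_bit) (simp add: z2_of_nat_bit bit_of_nat_iff_bit)
  then show ?thesis by (simp add: take_bit_eq_mod zmod_int)
qed

lemma z2_of_nat_trunc: "i < k \<Longrightarrow> z2_of_nat (nat (z2_trunc x k)) i = x i"
  using z2_trunc_nonneg[of x k] by (simp add: z2_of_nat_def z2_of_int_def flip: bit_iff_odd)

lemma z2_diff_digit: "i < k \<Longrightarrow> z2_diff x y i = bit (z2_trunc x k - z2_trunc y k) i"
proof -
  assume "i < k"
  then have "z2_trunc z (Suc i) = take_bit (Suc i) (z2_trunc z k)" for z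
    by (intro z2_trunc_eq_take_bit) simp
  then have "z2_diff x y i = bit (take_bit (Suc i) (z2_trunc x k - z2_trunc y k)) i"
    unfolding z2_diff_def by (simp only: take_bit_diff flip: take_bit_eq_mod bit_iff_odd)
  then show ?thesis by (simp add: bit_take_bit_iff)
qed

lemma z2_diff_eq_zero_upto: "(\<forall>i<k. \<not> z2_diff x y i) \<longleftrightarrow> (\<forall>i<k. x i = y i)"
proof -
  have "(\<forall>i<k. \<not> z2_diff x y i) \<longleftrightarrow> take_bit k (z2_trunc x k - z2_trunc y k) = 0"
    by (auto simp: z2_diff_digit bit_eq_iff bit_take_bit_iff)
  also have "\<dots> \<longleftrightarrow> take_bit k (z2_trunc x k) = take_bit k (z2_trunc y k)"
    by (simp add: take_bit_eq_mod mod_eq_dvd_iff dvd_eq_mod_eq_0)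
  also have "\<dots> \<longleftrightarrow> z2_trunc x k = z2_trunc y k"
    by (simp add: take_bit_int_eq_self z2_trunc_nonneg z2_trunc_less)
  finally show ?thesis by (simp add: z2_trunc_eq_iff)
qed

lemma z2_abs_eq_power:
  assumes "z m" and "\<And>i. i < m \<Longrightarrow> \<not> z i"
  shows "z2_abs z = (1/2) ^ m"
proof -
  have "(LEAST i. z i) = m"
    using assms by (intro Least_equality) (auto simp flip: not_less)
  then show ?thesis using assms(1) by (auto simp: z2_abs_def)
qed

lemma z2_abs_le_iff: "z2_abs z \<le> (1/2) ^ k \<longleftrightarrow> (\<forall>i<k. \<not> z i)"
proof (cases "\<exists>i. z i")
  case True
  then obtain m where "z m" and below: "\<And>i. i < m \<Longrightarrow> \<not> z i"
    using exists_least_iff[of z] by blast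
  then have "z2_abs z \<le> (1/2) ^ k \<longleftrightarrow> k \<le> m"
    by (simp add: z2_abs_eq_power power_decreasing_iff)
  also have "\<dots> \<longleftrightarrow> (\<forall>i<k. \<not> z i)"
    using \<open>z m\<close> below by (meson leI order_less_le_trans)
  finally show ?thesis .
qed (simp add: z2_abs_def)

lemma z2_abs_less_iff: "z2_abs z < (1/2) ^ k \<longleftrightarrow> (\<forall>i\<le>k. \<not> z i)"
proof (cases "\<exists>i. z i")
  case True
  then obtain m where "z m" and below: "\<And>i. i < m \<Longrightarrow> \<not> z i"
    using exists_least_iff[of z] by blast
  then have "z2_abs z < (1/2) ^ k \<longleftrightarrow> k < m"
    by (simp add: z2_abs_eq_power power_strict_decreasing_iff)
  also have "\<dots> \<longleftrightarrow> (\<forall>i\<le>k. \<not> z i)"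
    using \<open>z m\<close> below by (meson le_less_trans not_le)
  finally show ?thesis .
qed (simp add: z2_abs_def)

lemma z2_abs_eqI:
  assumes "\<And>k. (\<forall>i<k. \<not> u i) \<longleftrightarrow> (\<forall>i<k. \<not> v i)"
  shows "z2_abs u = z2_abs v"
proof (cases "\<exists>i. u i")
  case True
  then obtain m where "u m" and below: "\<And>i. i < m \<Longrightarrow> \<not> u i"
    using exists_least_iff[of u] by blast
  have "\<forall>i<m. \<not> v i" and "\<not> (\<forall>i<Suc m. \<not> v i)"
    using assms[of m] assms[of "Suc m"] \<open>u m\<close> below by auto
  then have "v m" by (auto simp: less_Suc_eq)
  with \<open>u m\<close> below \<open>\<forall>i<m. \<not> v i\<close> show ?thesis
    by (simp add: z2_abs_eq_power)
next
  case False
  have "\<not> v i" for i using assms[of "Suc i"] False by auto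
  with False show ?thesis by (simp add: z2_abs_def)
qed

lemma z2_abs_diff_le_iff: "z2_abs (z2_diff x y) \<le> (1/2) ^ k \<longleftrightarrow> (\<forall>i<k. x i = y i)"
  by (simp add: z2_abs_le_iff z2_diff_eq_zero_upto)

lemma z2_abs_diff_less_iff: "z2_abs (z2_diff x y) < (1/2) ^ k \<longleftrightarrow> (\<forall>i\<le>k. x i = y i)"
  using z2_diff_eq_zero_upto[of "Suc k" x y] by (simp add: z2_abs_less_iff less_Suc_eq_le)

lemma z2_continuous_iff:
  "z2_continuous F \<longleftrightarrow> (\<forall>x k. \<exists>m. \<forall>y. (\<forall>i<m. y i = x i) \<longrightarrow> (\<forall>i<k. F y i = F x i))"
proof
  assume F: "z2_continuous F"
  show "\<forall>x k. \<exists>m. \<forall>y. (\<forall>i<m. y i = x i) \<longrightarrow> (\<forall>i<k. F y i = F x i)"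
  proof (intro allI)
    fix x k
    have "(1/2::real) ^ k > 0" by simp
    then obtain d where "d > 0"
      and d: "\<And>y. z2_abs (z2_diff y x) < d \<Longrightarrow> z2_abs (z2_diff (F y) (F x)) < (1/2) ^ k"
      using F unfolding z2_continuous_def by blast
    obtain m where m: "(1/2::real) ^ m < d"
      using real_arch_pow_inv[OF \<open>d > 0\<close>, of "1/2"] by auto
    show "\<exists>m. \<forall>y. (\<forall>i<m. y i = x i) \<longrightarrow> (\<forall>i<k. F y i = F x i)"
    proof (rule exI[of _ m], rule allI, rule impI)
      fix y assume "\<forall>i<m. y i = x i"
      then have "z2_abs (z2_diff y x) \<le> (1/2) ^ m" by (simp add: z2_abs_diff_le_iff)
      then have "z2_abs (z2_diff (F y) (F x)) < (1/2) ^ k" using d m by simp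
      then show "\<forall>i<k. F y i = F x i" by (simp add: z2_abs_diff_less_iff)
    qed
  qed
next
  assume F: "\<forall>x k. \<exists>m. \<forall>y. (\<forall>i<m. y i = x i) \<longrightarrow> (\<forall>i<k. F y i = F x i)"
  show "z2_continuous F"
    unfolding z2_continuous_def
  proof (intro allI impI)
    fix x and e :: real
    assume "e > 0"
    obtain k where k: "(1/2::real) ^ k < e"
      using real_arch_pow_inv[OF \<open>e > 0\<close>, of "1/2"] by auto
    from F obtain m where m: "\<forall>y. (\<forall>i<m. y i = x i) \<longrightarrow> (\<forall>i<k. F y i = F x i)"
      by blast
    show "\<exists>d>0. \<forall>y. z2_abs (z2_diff y x) < d \<longrightarrow> z2_abs (z2_diff (F y) (F x)) < e"
    proof (intro exI[of _ "(1/2) ^ m"] conjI allI impI)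
      fix y assume "z2_abs (z2_diff y x) < (1/2) ^ m"
      then have "\<forall>i<m. y i = x i" by (simp add: z2_abs_diff_less_iff)
      then have "\<forall>i<k. F y i = F x i" using m by blast
      then have "z2_abs (z2_diff (F y) (F x)) \<le> (1/2) ^ k" by (simp add: z2_abs_diff_le_iff)
      then show "z2_abs (z2_diff (F y) (F x)) < e" using k by simp
    qed simp
  qed
qed

lemma z2_continuous_eqI:
  assumes "z2_continuous F" and "z2_continuous G"
    and "\<And>n. F (z2_of_nat n) = G (z2_of_nat n)"
  shows "F = G"
proof (intro ext)
  fix x i
  obtain m1 where F: "\<forall>y. (\<forall>j<m1. y j = x j) \<longrightarrow> (\<forall>j<Suc i. F y j = F x j)"
    using assms(1) unfolding z2_continuous_iff by blast
  obtain m2 where G: "\<forall>y. (\<forall>j<m2. y j = x j) \<longrightarrow> (\<forall>j<Suc i. G y j = G x j)"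
    using assms(2) unfolding z2_continuous_iff by blast
  define y where "y = z2_of_nat (nat (z2_trunc x (max m1 m2)))"
  have "\<forall>j<m1. y j = x j" and "\<forall>j<m2. y j = x j"
    using z2_of_nat_trunc y_def by simp_all
  then have "F y i = F x i" and "G y i = G x i"
    using F G lessI by blast+
  then show "F x i = G x i" using assms(3) y_def by simp
qed

lemma bit_A_mod_eq: "i < k \<Longrightarrow> bit (A (n mod 2 ^ k)) i = bit (A n) i"
  by (metis A_mod bit_take_bit_iff take_bit_eq_mod)

text \<open>Digit i of the extension at x is digit i of A(N) for any natural N \<equiv> x (mod 2^(i+1));
  by \<open>bit_A_mod_eq\<close> the choice of N does not matter.\<close>
definition A_ext :: "z2 \<Rightarrow> z2" where
  "A_ext x = (\<lambda>i. bit (A (nat (z2_trunc x (Suc i)))) i)"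

lemma A_ext_digit: "i < k \<Longrightarrow> A_ext x i = bit (A (nat (z2_trunc x k))) i"
proof -
  assume "i < k"
  obtain N where N: "z2_trunc x k = int N"
    using z2_trunc_nonneg zero_le_imp_eq_int by blast
  have "z2_trunc x (Suc i) = take_bit (Suc i) (z2_trunc x k)"
    using \<open>i < k\<close> by (intro z2_trunc_eq_take_bit) simp
  then have "nat (z2_trunc x (Suc i)) = take_bit (Suc i) N"
    by (simp only: N take_bit_of_nat nat_int)
  then show ?thesis by (simp add: A_ext_def N take_bit_eq_mod bit_A_mod_eq[OF lessI] del: power_Suc)
qed

lemma A_ext_of_nat: "A_ext (z2_of_nat n) = z2_of_nat (A n)"
  by (simp add: fun_eq_iff A_ext_def z2_trunc_of_nat bit_A_mod_eq[OF lessI] z2_of_nat_bit del: power_Suc)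

lemma z2_continuous_A_ext: "z2_continuous A_ext"
  unfolding z2_continuous_iff
proof (intro allI)
  fix x :: z2 and k
  show "\<exists>m. \<forall>y. (\<forall>i<m. y i = x i) \<longrightarrow> (\<forall>i<k. A_ext y i = A_ext x i)"
    by (intro exI[of _ k]) (auto simp: A_ext_digit z2_trunc_eq_iff[symmetric])
qed

lemma ex1_continuous_extension: "\<exists>!F. z2_continuous F \<and> (\<forall>n. F (z2_of_nat n) = z2_of_nat (A n))"
  using z2_continuous_A_ext A_ext_of_nat z2_continuous_eqI by metis

lemma Atil_eq_A_ext: "Atil = A_ext"
  unfolding Atil_def
  by (rule the1_equality[OF ex1_continuous_extension]) (simp add: z2_continuous_A_ext A_ext_of_nat)

lemma ck_spec: "k \<ge> 1 \<Longrightarrow> ck k < 2 ^ k \<and> (\<forall>n. 2 ^ k dvd A n \<longleftrightarrow> n mod 2 ^ k = ck k)"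
proof -
  assume "k \<ge> 1"
  then obtain r where "r < 2 ^ k" and r: "\<forall>n. 2 ^ k dvd A n \<longleftrightarrow> n mod 2 ^ k = r"
    using pow2_dvd_A_iff_mod_eq by blast
  then have "ck k = r"
    unfolding ck_def by (intro the_equality) auto
  with \<open>r < 2 ^ k\<close> r show ?thesis by simp
qed

lemma ex1_zero_below_power: "k \<ge> 1 \<Longrightarrow> \<exists>!c::nat. c < 2 ^ k \<and> 2 ^ k dvd A c"
  using ck_spec by (intro ex1I[of _ "ck k"]) auto

lemma ck_mod: "1 \<le> j \<Longrightarrow> j \<le> k \<Longrightarrow> ck k mod 2 ^ j = ck j"
proof -
  assume "1 \<le> j" "j \<le> k"
  then have "2 ^ k dvd A (ck k)" using ck_spec[of k] by simp
  moreover have "(2::nat) ^ j dvd 2 ^ k" using \<open>j \<le> k\<close> by (rule le_imp_power_dvd)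
  ultimately have "2 ^ j dvd A (ck k)" by (rule dvd_trans[rotated])
  then show ?thesis using ck_spec[of j] \<open>1 \<le> j\<close> by simp
qed

definition c_root :: z2 where
  "c_root i = bit (ck (Suc i)) i"

lemma c_root_digit: "i < k \<Longrightarrow> c_root i = bit (ck k) i"
proof -
  assume "i < k"
  then have "ck (Suc i) = take_bit (Suc i) (ck k)"
    by (simp add: ck_mod take_bit_eq_mod Suc_leI del: power_Suc)
  then show ?thesis by (simp add: c_root_def bit_take_bit_iff)
qed

lemma z2_trunc_c_root: "k \<ge> 1 \<Longrightarrow> z2_trunc c_root k = int (ck k)"
proof -
  assume "k \<ge> 1"
  have "z2_trunc c_root k = take_bit k (int (ck k))"
    by (rule z2_trunc_eq_take_bit) (simp add: c_root_digit bit_of_nat_iff_bit)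
  with ck_spec[OF \<open>k \<ge> 1\<close>] show ?thesis
    by (simp add: take_bit_of_nat take_bit_nat_eq_self)
qed

lemma A_ext_vanishes_iff: "(\<forall>i<k. \<not> A_ext x i) \<longleftrightarrow> (\<forall>i<k. x i = c_root i)"
proof (cases "k = 0")
  case False
  obtain N where N: "z2_trunc x k = int N"
    using z2_trunc_nonneg zero_le_imp_eq_int by blast
  have "N < 2 ^ k" using z2_trunc_less[of x k] N by (simp flip: of_nat_less_iff)
  have "(\<forall>i<k. \<not> A_ext x i) \<longleftrightarrow> take_bit k (A N) = 0"
    by (simp add: A_ext_digit N bit_eq_iff bit_take_bit_iff)
  also have "\<dots> \<longleftrightarrow> N = ck k"
    using ck_spec[of k] False \<open>N < 2 ^ k\<close> by (simp add: take_bit_eq_0_iff)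
  also have "\<dots> \<longleftrightarrow> z2_trunc x k = z2_trunc c_root k"
    using False by (simp add: N z2_trunc_c_root)
  finally show ?thesis by (simp add: z2_trunc_eq_iff)
qed simp

lemma Atil_eq_zero_iff: "Atil x = z2_zero \<longleftrightarrow> x = c_root"
proof -
  have "Atil x = z2_zero \<longleftrightarrow> (\<forall>k. \<forall>i<k. \<not> A_ext x i)"
    by (auto simp: Atil_eq_A_ext z2_zero_def fun_eq_iff)
  also have "\<dots> \<longleftrightarrow> (\<forall>k. \<forall>i<k. x i = c_root i)"
    by (simp add: A_ext_vanishes_iff)
  also have "\<dots> \<longleftrightarrow> x = c_root"
    by (auto simp: fun_eq_iff)
  finally show ?thesis .
qed

lemma z2_abs_Atil: "z2_abs (Atil x) = z2_abs (z2_diff x c_root)"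
  unfolding Atil_eq_A_ext by (rule z2_abs_eqI) (simp add: A_ext_vanishes_iff z2_diff_eq_zero_upto)

lemma z2_tendsto_ck: "z2_tendsto (\<lambda>k. z2_of_nat (ck k)) c_root"
  unfolding z2_tendsto_def
proof (intro allI impI)
  fix e :: real
  assume "e > 0"
  then obtain N where N: "(1/2::real) ^ N < e"
    using real_arch_pow_inv[of e "1/2"] by auto
  have "z2_abs (z2_diff (z2_of_nat (ck k)) c_root) < e" if "k \<ge> N" for k
  proof -
    have "z2_abs (z2_diff (z2_of_nat (ck k)) c_root) \<le> (1/2) ^ k"
      by (simp add: z2_abs_diff_le_iff z2_of_nat_bit c_root_digit)
    also have "\<dots> \<le> (1/2) ^ N" using \<open>k \<ge> N\<close> by (simp add: power_decreasing)
    finally show ?thesis using N by simp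
  qed
  then show "\<exists>N. \<forall>k\<ge>N. z2_abs (z2_diff (z2_of_nat (ck k)) c_root) < e" by blast
qed

text \<open>Modulo M, A(n + j) is A_shift_rem M n j plus (n+1)\<cdots>(n+j) A(n).  As 2^26 divides 30!,
  hence every product of 30 consecutive integers, A(36866675) mod 2^26 is computed from
  n = 36866645 without knowing A(n).\<close>
fun A_shift_rem :: "nat \<Rightarrow> nat \<Rightarrow> nat \<Rightarrow> nat" where
  "A_shift_rem M n 0 = 0"
| "A_shift_rem M n (Suc j) = ((n + Suc j) * A_shift_rem M n j + 1) mod M"

lemma A_shift_rem_numeral:
  "A_shift_rem M n (numeral w) = ((n + numeral w) * A_shift_rem M n (pred_numeral w) + 1) mod M"
  by (simp add: numeral_eq_Suc)

lemma A_add_mod: "A (n + j) mod M = (A_shift_rem M n j + pochhammer (n + 1) j * A n) mod M"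
proof (induction j)
  case (Suc j)
  have "A (n + Suc j) mod M = ((n + Suc j) * A (n + j) + 1) mod M"
    by simp
  also have "\<dots> = ((n + Suc j) * (A_shift_rem M n j + pochhammer (n + 1) j * A n) + 1) mod M"
    by (metis Suc.IH mod_add_left_eq mod_mult_right_eq)
  also have "\<dots> = ((n + Suc j) * A_shift_rem M n j + 1 + (n + 1 + j) * pochhammer (n + 1) j * A n) mod M"
    by (simp add: algebra_simps)
  also have "\<dots> = (A_shift_rem M n (Suc j) + pochhammer (n + 1) (Suc j) * A n) mod M"
    by (simp only: A_shift_rem.simps pochhammer_rec' of_nat_id mod_add_left_eq)
  finally show ?case .
qed simp

lemma fact_dvd_pochhammer_nat: "fact k dvd pochhammer (n::nat) k"
proof -
  have "int (fact k) dvd int (pochhammer n k)"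
    using fact_dvd_pochhammer[of k "int n"] by (simp add: pochhammer_of_nat)
  then show ?thesis by (simp only: int_dvd_int_iff)
qed

lemma A_add_mod_eq_shift_rem:
  "M dvd pochhammer (n + 1) j \<Longrightarrow> A (n + j) mod M = A_shift_rem M n j mod M"
  by (simp add: A_add_mod mod_add_right_eq[symmetric])

lemma A_36866675: "2 ^ 26 dvd A 36866675"
proof -
  have "(2::nat) ^ 26 dvd fact 30" by (simp add: fact_numeral)
  then have "2 ^ 26 dvd pochhammer (36866645 + 1 :: nat) 30"
    by (rule dvd_trans[OF _ fact_dvd_pochhammer_nat])
  then have "A (36866645 + 30) mod 2 ^ 26 = A_shift_rem (2 ^ 26) 36866645 30 mod 2 ^ 26"
    by (rule A_add_mod_eq_shift_rem)
  also have "\<dots> = 0" by (simp add: A_shift_rem_numeral)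
  finally show ?thesis by (simp add: dvd_eq_mod_eq_0)
qed

lemma c_digits_eq_bits: "c_digits = map (\<lambda>i. if bit (36866675::nat) i then 1 else 0) [0..<26]"
  by (simp add: c_digits_def upt_rec bit_iff_odd)

lemma ck_26: "ck 26 = 36866675"
  using ck_spec[of 26] A_36866675 by simp

lemma c_root_digits: "\<forall>i<length c_digits. c_root i = (c_digits ! i = 1)"
  by (simp add: c_digits_eq_bits c_root_digit[of _ 26] ck_26)

theorem propositionA10:
  shows "(\<exists>!F. z2_continuous F \<and> (\<forall>n. F (z2_of_nat n) = z2_of_nat (A n)))
    \<and> (\<forall>k\<ge>1. \<exists>!c::nat. c < 2 ^ k \<and> 2 ^ k dvd A c)
    \<and> (\<exists>c. z2_tendsto (\<lambda>k. z2_of_nat (ck k)) c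
           \<and> (\<forall>x. Atil x = z2_zero \<longleftrightarrow> x = c)
           \<and> (\<forall>i<length c_digits. c i = (c_digits ! i = 1))
           \<and> (\<forall>n. z2_abs (Atil n) = z2_abs (z2_diff n c)))"
  using ex1_continuous_extension ex1_zero_below_power
    z2_tendsto_ck Atil_eq_zero_iff c_root_digits z2_abs_Atil by blast

end
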